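(* Let $\mathcal{M}=(W,E,V)$ be a playable coalition model, $w\in W$, $C,D\subseteq N$, $X,Y\subseteq W$. (1) If $X\subseteq Y$ then $\nu^w_C(X)\le_t\nu^w_C(Y)$. (2) If $C\subseteq D$ then $\nu^w_C(X)\le_k\nu^w_D(X)$.
   Context: $N$ is a finite set of agents. A coalition model is $\mathcal{M}=(W,E,V)$ with $W$ nonempty and $E_w(C)\subseteq\mathcal{P}(W)$ for each $w\in W$, $C\subseteq N$. Write $\overline{X}=W\setminus X$. $E_w$ is playable if for all $C,D\subseteq N$, $X,Y\subseteq W$: (i) $\emptyset\notin E_w(C)$; (ii) $W\in E_w(C)$; (iii) if $X\in E_w(C)$ and $X\subseteq Y$ then $Y\in E_w(C)$; (iv) if $C\cap D=\emptyset$, $X\in E_w(C)$, $Y\in E_w(D)$ then $X\cap Y\in E_w(C\cup D)$; (v) $X\notin E_w(\emptyset)$ iff $\overline{X}\in E_w(N)$; the model is playable if each $E_w$ is. The strategic value of $X$ for $C$ at $w$ is $\nu^w_C(X)=(a,b)\in\{0,1\}^2$ where $a=1$ iff $X\in E_w(C)$ and $b=1$ iff $\overline{X}\in E_w(C)$. On $\{0,1\}^2$: $(a,b)\le_k(a',b')$ iff $a\le a'$ and $b\le b'$ (determination order); $(a,b)\le_t(a',b')$ iff $a\le a'$ and $b'\le b$ (directionality order). *)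

theory Defs
  imports Main
begin

text \<open>Agents: a finite type 'a, so N = UNIV. Valuation V assigns to each
  proposition letter a set of worlds (irrelevant to the statement).\<close>

definition compl_in :: "'w set \<Rightarrow> 'w set \<Rightarrow> 'w set" where
  "compl_in W X = W - X"

definition playable_at :: "'w set \<Rightarrow> ('w \<Rightarrow> 'a::finite set \<Rightarrow> 'w set set) \<Rightarrow> 'w \<Rightarrow> bool" where
  "playable_at W E w \<longleftrightarrow>
     (\<forall>C. E w C \<subseteq> Pow W) \<and>
     (\<forall>C. {} \<notin> E w C) \<and>
     (\<forall>C. W \<in> E w C) \<and>
     (\<forall>C X Y. X \<in> E w C \<and> X \<subseteq> Y \<and> Y \<subseteq> W \<longrightarrow> Y \<in> E w C) \<and>
     (\<forall>C D X Y. C \<inter> D = {} \<and> X \<in> E w C \<and> Y \<in> E w D \<longrightarrow> X \<inter> Y \<in> E w (C \<union> D)) \<and>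
     (\<forall>X. X \<subseteq> W \<longrightarrow> (X \<notin> E w {} \<longleftrightarrow> compl_in W X \<in> E w UNIV))"

definition coalition_model :: "'w set \<Rightarrow> ('w \<Rightarrow> 'a::finite set \<Rightarrow> 'w set set) \<Rightarrow> ('p \<Rightarrow> 'w set) \<Rightarrow> bool" where
  "coalition_model W E V \<longleftrightarrow> W \<noteq> {} \<and> (\<forall>w\<in>W. \<forall>C. E w C \<subseteq> Pow W) \<and> (\<forall>p. V p \<subseteq> W)"

definition playable_model :: "'w set \<Rightarrow> ('w \<Rightarrow> 'a::finite set \<Rightarrow> 'w set set) \<Rightarrow> ('p \<Rightarrow> 'w set) \<Rightarrow> bool" where
  "playable_model W E V \<longleftrightarrow> coalition_model W E V \<and> (\<forall>w\<in>W. playable_at W E w)"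

text \<open>Strategic value nu^w_C(X) = (a,b) in {0,1}^2, encoded with bool (False = 0, True = 1).\<close>
definition strat_val :: "'w set \<Rightarrow> ('w \<Rightarrow> 'a set \<Rightarrow> 'w set set) \<Rightarrow> 'w \<Rightarrow> 'a set \<Rightarrow> 'w set \<Rightarrow> bool \<times> bool" where
  "strat_val W E w C X = (X \<in> E w C, compl_in W X \<in> E w C)"

definition le_k :: "bool \<times> bool \<Rightarrow> bool \<times> bool \<Rightarrow> bool" where
  "le_k v v' \<longleftrightarrow> fst v \<le> fst v' \<and> snd v \<le> snd v'"

definition le_t :: "bool \<times> bool \<Rightarrow> bool \<times> bool \<Rightarrow> bool" where
  "le_t v v' \<longleftrightarrow> fst v \<le> fst v' \<and> snd v' \<le> snd v"

end

theory Submission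
  imports Defs
begin

lemma playable_at_subset:
  "playable_at W E w \<Longrightarrow> X \<in> E w C \<Longrightarrow> X \<subseteq> W"
  unfolding playable_at_def by (elim conjE) blast

lemma playable_at_top:
  "playable_at W E w \<Longrightarrow> W \<in> E w C"
  unfolding playable_at_def by (elim conjE) simp

lemma playable_at_upward_closed:
  "playable_at W E w \<Longrightarrow> X \<in> E w C \<Longrightarrow> X \<subseteq> Y \<Longrightarrow> Y \<subseteq> W \<Longrightarrow> Y \<in> E w C"
  unfolding playable_at_def by (elim conjE) simp

lemma playable_at_superadditive:
  "playable_at W E w \<Longrightarrow> C \<inter> D = {} \<Longrightarrow> X \<in> E w C \<Longrightarrow> Y \<in> E w D
    \<Longrightarrow> X \<inter> Y \<in> E w (C \<union> D)"
  unfolding playable_at_def by (elim conjE) simp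

lemma playable_at_coalition_mono:
  assumes playable: "playable_at W E w" and "C \<subseteq> D" and "Z \<in> E w C"
  shows "Z \<in> E w D"
proof -
  have "Z \<inter> W \<in> E w (C \<union> (D - C))"
    using playable_at_superadditive[OF playable _ \<open>Z \<in> E w C\<close> playable_at_top[OF playable]]
    by blast
  moreover have "C \<union> (D - C) = D" using \<open>C \<subseteq> D\<close> by blast
  moreover have "Z \<inter> W = Z" using playable_at_subset[OF playable \<open>Z \<in> E w C\<close>] by blast
  ultimately show ?thesis by simp
qed

lemma strat_val_le_t_mono:
  assumes playable: "playable_at W E w" and "X \<subseteq> Y" and "Y \<subseteq> W"
  shows "le_t (strat_val W E w C X) (strat_val W E w C Y)"
proof -
  have "X \<in> E w C \<longrightarrow> Y \<in> E w C"
    using playable_at_upward_closed[OF playable] assms(2,3) by blast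
  moreover have "W - Y \<in> E w C \<longrightarrow> W - X \<in> E w C"
    using playable_at_upward_closed[OF playable, of "W - Y" C "W - X"] \<open>X \<subseteq> Y\<close> by blast
  ultimately show ?thesis unfolding le_t_def strat_val_def compl_in_def by auto
qed

lemma strat_val_le_k_coalition_mono:
  assumes "playable_at W E w" and "C \<subseteq> D"
  shows "le_k (strat_val W E w C X) (strat_val W E w D X)"
  using playable_at_coalition_mono[OF assms]
  unfolding le_k_def strat_val_def by auto

theorem mainTheorem9:
  fixes W :: "'w set" and E :: "'w \<Rightarrow> 'a::finite set \<Rightarrow> 'w set set" and V :: "'p \<Rightarrow> 'w set"
    and w :: 'w and C D :: "'a set" and X Y :: "'w set"
  assumes "playable_model W E V" and "w \<in> W" and "X \<subseteq> W" and "Y \<subseteq> W"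
  shows "(X \<subseteq> Y \<longrightarrow> le_t (strat_val W E w C X) (strat_val W E w C Y))
       \<and> (C \<subseteq> D \<longrightarrow> le_k (strat_val W E w C X) (strat_val W E w D X))"
proof -
  have playable: "playable_at W E w"
    using assms(1,2) unfolding playable_model_def by blast
  show ?thesis
    using strat_val_le_t_mono[OF playable _ \<open>Y \<subseteq> W\<close>]
      strat_val_le_k_coalition_mono[OF playable] by blast
qed

end
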